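(* Let $I\subset\mathbb{R}$ be an open interval and let $\mathcal{L}:(0,\infty)\times I\to\mathbb{R}$, $(X,\phi)\mapsto\mathcal{L}(X,\phi)$, be a smooth function with $\mathcal{L}_X\neq 0$ everywhere. Define $p=\mathcal{L}$ and $\rho=2X\mathcal{L}_X-\mathcal{L}$, regarded as functions of the two independent variables $(X,\phi)$. Then the following are equivalent: (i) (isentropy) there exists a smooth nowhere-vanishing function $n:(0,\infty)\times I\to\mathbb{R}$ such that the Gibbs relation with $\mathrm{d}(s/n)=0$, namely $$\mathrm{d}\!\left(\frac{\rho+p}{n}\right)=\frac{1}{n}\,\mathrm{d}p \quad\Longleftrightarrow\quad \mathrm{d}\rho-(\rho+p)\frac{\mathrm{d}n}{n}=0,$$ holds identically as an equality of differential $1$-forms in $(X,\phi)$, i.e. $\rho_X=(\rho+p)\,n_X/n$ and $\rho_\phi=(\rho+p)\,n_\phi/n$; (ii) there exist a smooth function $f:I\to\mathbb{R}$ and a smooth function $G:(0,\infty)\to\mathbb{R}$ such that $\mathcal{L}(X,\phi)=G(\tilde X)$ with $\tilde X=e^{-2f(\phi)}X$; equivalently, after the field redefinition $\tilde\phi$ defined by $\tilde\phi_{,\mu}=e^{-f(\phi)}\phi_{,\mu}$ (so that $\tilde X=\tfrac12 g^{\mu\nu}\tilde\phi_{,\mu}\tilde\phi_{,\nu}$), the Lagrangian depends only on the kinetic term $\tilde X$ and not explicitly on $\tilde\phi$. Moreover, in this case $n$ is necessarily of the form $n=e^{f(\phi)}\sqrt{2X}\,\mathcal{L}_X$ (for $f$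 as in (ii), up to sign), and $-\mathcal{L}_\phi=2X\mathcal{L}_X f'(\phi)$; in terms of $\tilde X$ one has $n=\sqrt{2\tilde X}\,G'(\tilde X)$.
   Context: A scalar field $\phi$ on a spacetime with metric $g_{\mu\nu}$ of signature $(+,-,-,-)$ has action $S=\int\mathcal{L}(X,\phi)\sqrt{-g}\,\mathrm{d}^4x$ with kinetic term $X=\tfrac12 g^{\mu\nu}\phi_{,\mu}\phi_{,\nu}>0$; subscripts $X,\phi$ denote partial derivatives. Its stress tensor $T_{\mu\nu}=\mathcal{L}_X\phi_{,\mu}\phi_{,\nu}-\mathcal{L}g_{\mu\nu}$ is that of a perfect fluid with pressure $p=\mathcal{L}$, energy density $\rho=2X\mathcal{L}_X-\mathcal{L}$ and four-velocity $u_\mu=\phi_{,\mu}/\sqrt{2X}$. Thermodynamically, $n$ denotes the particle number density, $s$ the entropy density, and Gibbs' relation reads $\mathrm{d}((\rho+p)/n)=T\,\mathrm{d}(s/n)+\mathrm{d}p/n$; the flow is called isentropic when $\mathrm{d}(s/n)=0$. *)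

theory Defs
  imports "HOL-Analysis.Analysis"
begin

definition pX :: "(real \<times> real \<Rightarrow> real) \<Rightarrow> real \<times> real \<Rightarrow> real" where
  "pX F z = deriv (\<lambda>t. F (t, snd z)) (fst z)"

definition pPhi :: "(real \<times> real \<Rightarrow> real) \<Rightarrow> real \<times> real \<Rightarrow> real" where
  "pPhi F z = deriv (\<lambda>t. F (fst z, t)) (snd z)"

fun iter_pd :: "bool list \<Rightarrow> (real \<times> real \<Rightarrow> real) \<Rightarrow> real \<times> real \<Rightarrow> real" where
  "iter_pd [] F = F"
| "iter_pd (d # ds) F = (if d then pX (iter_pd ds F) else pPhi (iter_pd ds F))"

definition smooth2_on :: "(real \<times> real) set \<Rightarrow> (real \<times> real \<Rightarrow> real) \<Rightarrow> bool" where
  "smooth2_on S F \<longleftrightarrow>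
     (\<forall>ds. continuous_on S (iter_pd ds F) \<and> (\<forall>z\<in>S. iter_pd ds F differentiable (at z)))"

definition smooth1_on :: "real set \<Rightarrow> (real \<Rightarrow> real) \<Rightarrow> bool" where
  "smooth1_on S g \<longleftrightarrow> (\<forall>k. \<forall>x\<in>S. ((deriv ^^ k) g) differentiable (at x))"

definition isentropic_n ::
  "real set \<Rightarrow> (real \<times> real \<Rightarrow> real) \<Rightarrow> (real \<times> real \<Rightarrow> real) \<Rightarrow> bool" where
  "isentropic_n I L n \<longleftrightarrow>
     (let D = {0<..} \<times> I; p = L; \<rho> = (\<lambda>z. 2 * fst z * pX L z - L z) in
      smooth2_on D n \<and> (\<forall>z\<in>D. n z \<noteq> 0) \<and>
      (\<forall>z\<in>D. pX \<rho> z = (\<rho> z + p z) * pX n z / n z \<and>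
              pPhi \<rho> z = (\<rho> z + p z) * pPhi n z / n z))"

definition field_redef ::
  "real set \<Rightarrow> (real \<times> real \<Rightarrow> real) \<Rightarrow> (real \<Rightarrow> real) \<Rightarrow> (real \<Rightarrow> real) \<Rightarrow> bool" where
  "field_redef I L f G \<longleftrightarrow>
     smooth1_on I f \<and> smooth1_on {0<..} G \<and>
     (\<forall>X>0. \<forall>\<phi>\<in>I. L (X, \<phi>) = G (exp (- 2 * f \<phi>) * X))"

end

theory Submission
  imports Defs
begin

text \<open>Write \<open>n = w \<cdot> \<surd>(2X) \<cdot> L\<^sub>X\<close>. Since \<open>\<rho> + p = 2X L\<^sub>X\<close> and
  \<open>\<rho>\<^sub>X = L\<^sub>X + 2X L\<^sub>X\<^sub>X\<close>, the \<open>X\<close>-component of the Gibbs relation says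
  exactly \<open>w\<^sub>X = 0\<close>, and its \<open>\<phi>\<close>-component says \<open>-L\<^sub>\<phi> = 2X L\<^sub>X w\<^sub>\<phi>/w\<close>.
  So an admissible \<open>w\<close> is \<open>\<plusminus>e\<^bsup>f(\<phi>)\<^esup>\<close>, and then \<open>-L\<^sub>\<phi> = 2X L\<^sub>X f'\<close> states that
  \<open>L\<close> is constant along the curves \<open>\<phi> \<mapsto> (e\<^bsup>2f(\<phi>)\<^esup>Y, \<phi>)\<close>, i.e.
  \<open>L(X,\<phi>) = G(e\<^bsup>-2f(\<phi>)\<^esup>X)\<close>. Conversely every such \<open>L\<close> satisfies
  \<open>-L\<^sub>\<phi> = 2X L\<^sub>X f'\<close>, so \<open>w = e\<^bsup>f(\<phi>)\<^esup>\<close> yields a suitable \<open>n\<close>.\<close>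

section \<open>Partial derivatives\<close>

lemma has_derivative_pair_chain:
  fixes F :: "real \<times> real \<Rightarrow> real"
  assumes F: "(F has_derivative D) (at (a x, b x))"
    and a: "(a has_real_derivative a') (at x)" and b: "(b has_real_derivative b') (at x)"
  shows "((\<lambda>t. F (a t, b t)) has_real_derivative D (a', b')) (at x)"
proof -
  have "((\<lambda>t. (a t, b t)) has_derivative (\<lambda>h. h *\<^sub>R (a', b'))) (at x)"
    using has_derivative_Pair[OF a[unfolded has_field_derivative_def]
        b[unfolded has_field_derivative_def]]
    by (simp add: mult.commute)
  from has_derivative_compose[OF this F]
  have "((\<lambda>t. F (a t, b t)) has_derivative (\<lambda>h. h *\<^sub>R D (a', b'))) (at x)"
    by (simp only: linear_scale[OF has_derivative_linear[OF F]])
  then show ?thesis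
    unfolding has_field_derivative_def by (simp add: mult_commute_abs)
qed

lemma frechet_derivative_partials:
  fixes F :: "real \<times> real \<Rightarrow> real"
  assumes "F differentiable (at z)"
  shows "frechet_derivative F (at z) v = fst v * pX F z + snd v * pPhi F z"
proof -
  define D where "D = frechet_derivative F (at z)"
  have D: "(F has_derivative D) (at (fst z, snd z))"
    using assms unfolding D_def frechet_derivative_works by simp
  have "pX F z = D (1, 0)"
    unfolding pX_def
    by (rule DERIV_imp_deriv, rule has_derivative_pair_chain[OF D DERIV_ident DERIV_const])
  moreover have "pPhi F z = D (0, 1)"
    unfolding pPhi_def
    by (rule DERIV_imp_deriv, rule has_derivative_pair_chain[OF D DERIV_const DERIV_ident])
  moreover have "D v = fst v * D (1, 0) + snd v * D (0, 1)"
  proof -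
    have "D v = D (fst v *\<^sub>R (1, 0) + snd v *\<^sub>R (0, 1))"
      by simp
    then show ?thesis
      by (simp only: linear_add linear_scale has_derivative_linear[OF D]) simp
  qed
  ultimately show ?thesis
    unfolding D_def by simp
qed

lemma DERIV_partials_chain:
  fixes F :: "real \<times> real \<Rightarrow> real"
  assumes "F differentiable (at (a x, b x))"
    and "(a has_real_derivative a') (at x)" "(b has_real_derivative b') (at x)"
  shows "((\<lambda>t. F (a t, b t)) has_real_derivative
    a' * pX F (a x, b x) + b' * pPhi F (a x, b x)) (at x)"
  using has_derivative_pair_chain[OF frechet_derivative_works[THEN iffD1, OF assms(1)] assms(2,3)]
    frechet_derivative_partials[OF assms(1)] by simp

lemma pX_DERIV:
  "F differentiable (at z) \<Longrightarrow> ((\<lambda>t. F (t, snd z)) has_real_derivative pX F z) (at (fst z))"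
  using DERIV_partials_chain[of F "\<lambda>t. t" "fst z" "\<lambda>t. snd z" 1 0] by simp

lemma pPhi_DERIV:
  "F differentiable (at z) \<Longrightarrow> ((\<lambda>t. F (fst z, t)) has_real_derivative pPhi F z) (at (snd z))"
  using DERIV_partials_chain[of F "\<lambda>t. fst z" "snd z" "\<lambda>t. t" 0 1] by simp

lemma partials_cong:
  assumes "open S" "z \<in> S" "\<forall>y\<in>S. F y = G y"
  shows "pX F z = pX G z" "pPhi F z = pPhi G z"
proof -
  have "open ((\<lambda>t. (t, snd z)) -` S)" "open ((\<lambda>t. (fst z, t)) -` S)"
    using assms(1) by (auto intro!: continuous_open_vimage continuous_intros)
  from this[THEN eventually_nhds_in_open]
  have "\<forall>\<^sub>F t in nhds (fst z). (t, snd z) \<in> S" "\<forall>\<^sub>F t in nhds (snd z). (fst z, t) \<in> S"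
    using assms(2) by simp_all
  then show "pX F z = pX G z" "pPhi F z = pPhi G z"
    unfolding pX_def pPhi_def
    by (auto intro!: deriv_cong_ev elim!: eventually_mono simp: assms(3))
qed

lemma differentiable_transform_within_open:
  assumes "f differentiable (at x)" "open S" "x \<in> S" "\<forall>y\<in>S. f y = g y"
  shows "g differentiable (at x)"
  using assms has_derivative_transform_within_open unfolding differentiable_def by blast

lemma frechet_derivative_eqI:
  "(F has_derivative D) (at z) \<Longrightarrow> F differentiable (at z) \<and> frechet_derivative F (at z) = D"
  using frechet_derivative_at differentiableI by blast

lemma continuous_on_nonzero_sign:
  fixes h :: "real \<Rightarrow> real"
  assumes "is_interval I" "continuous_on I h" "\<forall>x\<in>I. h x \<noteq> 0"
  obtains \<sigma> where "\<sigma> \<in> {1, -1}" "\<forall>x\<in>I. \<sigma> * h x > 0"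
proof -
  have connected: "connected (h ` I)"
    by (rule connected_continuous_image[OF assms(2) is_interval_connected[OF assms(1)]])
  have "(\<forall>x\<in>I. h x > 0) \<or> (\<forall>x\<in>I. h x < 0)"
  proof (rule ccontr)
    assume "\<not> ?thesis"
    then obtain a b where "a \<in> I" "b \<in> I" "h a \<le> 0" "0 \<le> h b"
      by (auto simp: not_less)
    then have "\<exists>y\<in>h ` I. y = 0"
      using connected_ivt_hyperplane[OF connected, of "h a" "h b" 1 0] by auto
    then show False
      using assms(3) by auto
  qed
  then show ?thesis
    using that[of 1] that[of "-1"] by auto
qed

lemma eq_along_fst_if_pX_zero:
  assumes "convex A" "\<forall>z\<in>A \<times> B. F differentiable (at z) \<and> pX F z = 0"
    and "X \<in> A" "Y \<in> A" "\<phi> \<in> B"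
  shows "F (X, \<phi>) = F (Y, \<phi>)"
proof -
  have "((\<lambda>t. F (t, \<phi>)) has_real_derivative 0) (at t within A)" if "t \<in> A" for t
  proof -
    have "F differentiable (at (t, \<phi>))" "pX F (t, \<phi>) = 0"
      using assms(2,5) that by auto
    then show ?thesis
      using pX_DERIV[of F "(t, \<phi>)"] by (simp add: has_field_derivative_at_within)
  qed
  then obtain c where "\<forall>t\<in>A. F (t, \<phi>) = c"
    using has_field_derivative_zero_constant[OF assms(1)] by blast
  then show ?thesis
    using assms(3,4) by simp
qed

section \<open>Smooth functions of one variable\<close>

lemma smooth1_on_coinduct:
  assumes "open S" "P g"
    and step: "\<And>h. P h \<Longrightarrow> (\<forall>x\<in>S. h differentiable (at x)) \<and> (\<exists>h'. P h' \<and> (\<forall>x\<in>S. deriv h x = h' x))"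
  shows "smooth1_on S g"
proof -
  have "\<exists>h. P h \<and> (\<forall>x\<in>S. (deriv ^^ k) g x = h x)" for k
  proof (induction k)
    case 0
    show ?case using assms(2) by auto
  next
    case (Suc k)
    then obtain h where h: "P h" "\<forall>x\<in>S. (deriv ^^ k) g x = h x" by blast
    obtain h' where h': "P h'" "\<forall>x\<in>S. deriv h x = h' x" using step[OF h(1)] by blast
    have "deriv ((deriv ^^ k) g) x = h' x" if "x \<in> S" for x
    proof -
      have "\<forall>\<^sub>F y in nhds x. (deriv ^^ k) g y = h y"
        using eventually_nhds_in_open[OF assms(1) that] h(2) by (auto elim: eventually_mono)
      then show ?thesis
        using deriv_cong_ev h'(2) that by fastforce
    qed
    then show ?case using h'(1) by auto
  qed
  then show ?thesis
    unfolding smooth1_on_def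
    using assms(1) step differentiable_transform_within_open by metis
qed

lemma smooth1_on_differentiable: "smooth1_on S h \<Longrightarrow> x \<in> S \<Longrightarrow> h differentiable (at x)"
  unfolding smooth1_on_def by (metis funpow_0)

lemma smooth1_on_deriv: "smooth1_on S h \<Longrightarrow> smooth1_on S (deriv h)"
  unfolding smooth1_on_def by (metis funpow_Suc_right comp_apply)

lemma smooth1_on_if_DERIV:
  assumes "open S" "\<forall>x\<in>S. (g has_real_derivative g' x) (at x)" "smooth1_on S g'"
  shows "smooth1_on S g"
proof (rule smooth1_on_coinduct[where P = "\<lambda>h. h = g \<or> smooth1_on S h"])
  fix h assume "h = g \<or> smooth1_on S h"
  then show "(\<forall>x\<in>S. h differentiable (at x)) \<and>
    (\<exists>h'. (h' = g \<or> smooth1_on S h') \<and> (\<forall>x\<in>S. deriv h x = h' x))"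
  proof
    assume "h = g"
    then show ?thesis
      using assms(2,3) DERIV_imp_deriv real_differentiable_def by blast
  qed (use smooth1_on_differentiable smooth1_on_deriv in blast)
qed (use assms(1) in simp_all)

lemma smooth1_on_powr:
  fixes g :: "real \<Rightarrow> real"
  assumes "\<forall>x>0. g x = c * x powr r"
  shows "smooth1_on {0<..} g"
proof (rule smooth1_on_coinduct[where P = "\<lambda>h. \<exists>c r. \<forall>x>0. h x = c * x powr r"])
  fix h :: "real \<Rightarrow> real" assume "\<exists>c r. \<forall>x>0. h x = c * x powr r"
  then obtain c r where h: "\<forall>x>0. h x = c * x powr r" by blast
  have "(h has_real_derivative c * (r * x powr (r - 1))) (at x)" if "x \<in> {0<..}" for x
    by (rule has_field_derivative_transform_within_open[OF DERIV_cmult[OF has_real_derivative_powr]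
          open_greaterThan]) (use h that in auto)
  then show "(\<forall>x\<in>{0<..}. h differentiable (at x)) \<and>
    (\<exists>h'. (\<exists>c r. \<forall>x>0. h' x = c * x powr r) \<and> (\<forall>x\<in>{0<..}. deriv h x = h' x))"
    using DERIV_imp_deriv real_differentiable_def
    by (intro conjI exI[of _ "\<lambda>x. c * (r * x powr (r - 1))"])
      (auto simp: mult.assoc[symmetric])
qed (use assms in auto)

lemma smooth1_on_sqrt: "smooth1_on {0<..} sqrt"
  by (rule smooth1_on_powr[of _ 1 "1/2"]) (simp add: powr_half_sqrt)

lemma smooth1_on_ln: "smooth1_on {0<..} ln"
proof (rule smooth1_on_if_DERIV[where g' = "\<lambda>x. x powr -1"])
  show "smooth1_on {0<..} (\<lambda>x. x powr -1)"
    by (rule smooth1_on_powr[of _ 1 "-1"]) simp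
qed (auto simp: powr_neg_one DERIV_ln_divide)

lemma smooth1_on_exp: "smooth1_on UNIV exp"
proof (rule smooth1_on_coinduct[where P = "\<lambda>h. h = exp"])
  fix h :: "real \<Rightarrow> real"
  assume "h = exp"
  then show "(\<forall>x\<in>UNIV. h differentiable (at x)) \<and> (\<exists>h'. h' = exp \<and> (\<forall>x\<in>UNIV. deriv h x = h' x))"
    using DERIV_exp DERIV_imp_deriv real_differentiable_def by blast
qed simp_all

section \<open>Smooth functions of two variables\<close>

lemma iter_pd_append: "iter_pd ds (iter_pd es F) = iter_pd (ds @ es) F"
  by (induction ds) auto

lemma smooth2_on_partials:
  assumes "smooth2_on S F"
  shows "smooth2_on S (pX F)" "smooth2_on S (pPhi F)"
  using assms iter_pd_append[of _ "[True]"] iter_pd_append[of _ "[False]"]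
  unfolding smooth2_on_def by (metis iter_pd.simps)+

lemma smooth2_on_differentiable: "smooth2_on S F \<Longrightarrow> z \<in> S \<Longrightarrow> F differentiable (at z)"
  unfolding smooth2_on_def by (metis iter_pd.simps(1))

text \<open>Every member is smooth (\<open>smooth2_on_closure\<close>): it suffices to see that the first
  derivatives of each generated function are again generated, which avoids the Leibniz and
  Faa di Bruno formulas for higher derivatives.\<close>

inductive_set smooth2_closure :: "(real \<times> real) set \<Rightarrow> (real \<times> real \<Rightarrow> real) set"
  for S :: "(real \<times> real) set" where
  smooth: "smooth2_on S F \<Longrightarrow> F \<in> smooth2_closure S"
| const: "(\<lambda>z. c) \<in> smooth2_closure S"
| fst: "fst \<in> smooth2_closure S"
| snd: "snd \<in> smooth2_closure S"
| add: "F \<in> smooth2_closure S \<Longrightarrow> G \<in> smooth2_closure S \<Longrightarrow> (\<lambda>z. F z + G z) \<in> smooth2_closure S"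
| mult: "F \<in> smooth2_closure S \<Longrightarrow> G \<in> smooth2_closure S \<Longrightarrow> (\<lambda>z. F z * G z) \<in> smooth2_closure S"
| inverse: "F \<in> smooth2_closure S \<Longrightarrow> \<forall>z\<in>S. F z \<noteq> 0 \<Longrightarrow> (\<lambda>z. inverse (F z)) \<in> smooth2_closure S"
| comp: "smooth1_on T h \<Longrightarrow> open T \<Longrightarrow> F \<in> smooth2_closure S \<Longrightarrow> \<forall>z\<in>S. F z \<in> T \<Longrightarrow>
    (\<lambda>z. h (F z)) \<in> smooth2_closure S"
| cong: "F \<in> smooth2_closure S \<Longrightarrow> \<forall>z\<in>S. F z = G z \<Longrightarrow> G \<in> smooth2_closure S"

lemma smooth2_closure_frechet_derivativeI:
  assumes G: "\<And>z. z \<in> S \<Longrightarrow> G differentiable (at z) \<and> frechet_derivative G (at z) = D z"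
    and D: "\<And>v. (\<lambda>z. D z v) \<in> smooth2_closure S"
  shows "(\<forall>z\<in>S. G differentiable (at z)) \<and>
    (\<forall>v. (\<lambda>z. frechet_derivative G (at z) v) \<in> smooth2_closure S)"
proof (intro conjI ballI allI)
  show "G differentiable (at z)" if "z \<in> S" for z
    using G[OF that] ..
  show "(\<lambda>z. frechet_derivative G (at z) v) \<in> smooth2_closure S" for v
    by (rule smooth2_closure.cong[OF D[of v]]) (simp add: G)
qed

lemma smooth2_closure_frechet_derivative:
  assumes "open S" "F \<in> smooth2_closure S"
  shows "(\<forall>z\<in>S. F differentiable (at z)) \<and>
    (\<forall>v. (\<lambda>z. frechet_derivative F (at z) v) \<in> smooth2_closure S)"
proof -
  note works = frechet_derivative_works[THEN iffD1]
  from assms(2) show ?thesis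
  proof induction
    case (smooth F)
    have "(\<lambda>z. fst v * pX F z + snd v * pPhi F z) \<in> smooth2_closure S" for v
      using smooth2_on_partials[OF smooth]
      by (intro smooth2_closure.add smooth2_closure.mult smooth2_closure.const
          smooth2_closure.smooth)
    then show ?case
      using smooth2_on_differentiable[OF smooth] frechet_derivative_partials
      by (intro smooth2_closure_frechet_derivativeI[where
            D = "\<lambda>z v. fst v * pX F z + snd v * pPhi F z"]) (auto intro!: ext)
  next
    case (const c)
    show ?case
      by (rule smooth2_closure_frechet_derivativeI[where D = "\<lambda>z v. 0"])
        (auto intro: smooth2_closure.const)
  next
    case fst
    show ?case
      by (rule smooth2_closure_frechet_derivativeI,
          rule frechet_derivative_eqI[OF has_derivative_fst[OF has_derivative_ident]])
        (rule smooth2_closure.const)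
  next
    case snd
    show ?case
      by (rule smooth2_closure_frechet_derivativeI,
          rule frechet_derivative_eqI[OF has_derivative_snd[OF has_derivative_ident]])
        (rule smooth2_closure.const)
  next
    case (add F G)
    show ?case
      by (rule smooth2_closure_frechet_derivativeI, rule frechet_derivative_eqI,
          rule has_derivative_add[OF works works])
        (use add in \<open>auto intro: smooth2_closure.add\<close>)
  next
    case (mult F G)
    show ?case
      by (rule smooth2_closure_frechet_derivativeI, rule frechet_derivative_eqI,
          rule has_derivative_mult[OF works works])
        (use mult in \<open>auto intro!: smooth2_closure.add smooth2_closure.mult\<close>)
  next
    case (inverse F)
    let ?D = "\<lambda>z v. (-1) * (inverse (F z) * frechet_derivative F (at z) v * inverse (F z))"
    show ?case
    proof (rule smooth2_closure_frechet_derivativeI[where D = ?D])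
      show "(\<lambda>z. inverse (F z)) differentiable (at z) \<and>
        frechet_derivative (\<lambda>z. inverse (F z)) (at z) = ?D z"
        if "z \<in> S" for z
        using frechet_derivative_eqI[OF Deriv.has_derivative_inverse[OF _ works[of F "at z"]]]
          inverse that
        by simp
      show "(\<lambda>z. ?D z v) \<in> smooth2_closure S" for v
        using inverse
        by (intro smooth2_closure.mult smooth2_closure.const smooth2_closure.inverse)
          (auto simp del: split_paired_All)
    qed
  next
    case (comp T h F)
    have dh: "(h has_derivative (*) (deriv h (F z))) (at (F z))" if "z \<in> S" for z
      using smooth1_on_differentiable[OF comp.hyps(1)] comp.hyps(4) that
      by (simp add: DERIV_deriv_iff_real_differentiable[symmetric] has_field_derivative_def)
    let ?D = "\<lambda>z v. deriv h (F z) * frechet_derivative F (at z) v"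
    show ?case
    proof (rule smooth2_closure_frechet_derivativeI[where D = ?D])
      show "(\<lambda>z. h (F z)) differentiable (at z) \<and> frechet_derivative (\<lambda>z. h (F z)) (at z) = ?D z"
        if "z \<in> S" for z
        using frechet_derivative_eqI[OF has_derivative_compose[OF works[of F "at z"] dh[OF that]]]
          comp that
        by auto
      show "(\<lambda>z. ?D z v) \<in> smooth2_closure S" for v
        using comp smooth2_closure.comp[OF smooth1_on_deriv[OF comp.hyps(1)] comp.hyps(2-4)]
        by (intro smooth2_closure.mult) (auto simp del: split_paired_All)
    qed
  next
    case (cong F G)
    show ?case
      by (rule smooth2_closure_frechet_derivativeI[where D = "\<lambda>z. frechet_derivative F (at z)"])
        (use cong assms(1) differentiable_transform_within_open
          frechet_derivative_transform_within_open
          in metis)+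
  qed
qed

lemma smooth2_on_closure:
  assumes "open S" "F \<in> smooth2_closure S"
  shows "smooth2_on S F"
proof -
  have "pX G \<in> smooth2_closure S \<and> pPhi G \<in> smooth2_closure S" if G: "G \<in> smooth2_closure S" for G
  proof -
    note DG = smooth2_closure_frechet_derivative[OF assms(1) G]
    have "\<forall>z\<in>S. frechet_derivative G (at z) (1, 0) = pX G z"
      "\<forall>z\<in>S. frechet_derivative G (at z) (0, 1) = pPhi G z"
      using DG frechet_derivative_partials by auto
    then show ?thesis
      using DG smooth2_closure.cong by blast
  qed
  then have "iter_pd ds F \<in> smooth2_closure S" for ds
    by (induction ds) (auto simp: assms(2))
  then show ?thesis
    unfolding smooth2_on_def
    using smooth2_closure_frechet_derivative[OF assms(1)]
    by (meson continuous_at_imp_continuous_on differentiable_imp_continuous_within)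
qed

lemma smooth2_closure_sqrt_fst:
  "\<forall>z\<in>S. fst z > 0 \<Longrightarrow> (\<lambda>z. sqrt (2 * fst z)) \<in> smooth2_closure S"
  by (rule smooth2_closure.comp[OF smooth1_on_sqrt open_greaterThan
        smooth2_closure.mult[OF smooth2_closure.const smooth2_closure.fst]]) auto

lemma smooth1_on_line:
  assumes "open S" "open T" "smooth2_on S F" "\<forall>t\<in>T. (a + u * t, b + v * t) \<in> S"
  shows "smooth1_on T (\<lambda>t. F (a + u * t, b + v * t))"
proof (rule smooth1_on_coinduct[OF assms(2),
      where P = "\<lambda>g. \<exists>H. smooth2_on S H \<and> (\<forall>t\<in>T. g t = H (a + u * t, b + v * t))"])
  show "\<exists>H. smooth2_on S H \<and> (\<forall>t\<in>T. F (a + u * t, b + v * t) = H (a + u * t, b + v * t))"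
    using assms(3) by blast
next
  fix g :: "real \<Rightarrow> real"
  assume "\<exists>H. smooth2_on S H \<and> (\<forall>t\<in>T. g t = H (a + u * t, b + v * t))"
  then obtain H where H: "smooth2_on S H" "\<forall>t\<in>T. g t = H (a + u * t, b + v * t)"
    by blast
  define H' where "H' = (\<lambda>z. u * pX H z + v * pPhi H z)"
  have dg: "(g has_real_derivative H' (a + u * t, b + v * t)) (at t)" if "t \<in> T" for t
  proof (rule has_field_derivative_transform_within_open[OF _ assms(2) that])
    show "((\<lambda>t. H (a + u * t, b + v * t)) has_real_derivative H' (a + u * t, b + v * t)) (at t)"
      unfolding H'_def
    proof (rule DERIV_partials_chain)
      show "H differentiable (at (a + u * t, b + v * t))"
        using smooth2_on_differentiable[OF H(1)] assms(4) that by blast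
    qed (auto intro!: derivative_eq_intros)
  qed (use H(2) in simp)
  have "(\<forall>t\<in>T. g differentiable (at t)) \<and> (\<forall>t\<in>T. deriv g t = H' (a + u * t, b + v * t))"
    using dg DERIV_imp_deriv[OF dg] real_differentiable_def by blast
  moreover have "smooth2_on S H'"
    unfolding H'_def using smooth2_on_partials[OF H(1)]
    by (intro smooth2_on_closure[OF assms(1)], intro smooth2_closure.add smooth2_closure.mult
        smooth2_closure.const smooth2_closure.smooth)
  ultimately show "(\<forall>t\<in>T. g differentiable (at t)) \<and>
      (\<exists>g'. (\<exists>H. smooth2_on S H \<and> (\<forall>t\<in>T. g' t = H (a + u * t, b + v * t))) \<and>
        (\<forall>t\<in>T. deriv g t = g' t))"
    by (intro conjI exI[of _ "\<lambda>t. H' (a + u * t, b + v * t)"] exI[of _ H']) auto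
qed

section \<open>Isentropic Lagrangians\<close>

lemma sqrt_exp_scaled: "sqrt (2 * (exp (- 2 * a) * X)) = exp (- a) * sqrt (2 * X)"
proof -
  have "2 * (exp (- 2 * a) * X) = (exp (- a))\<^sup>2 * (2 * X)"
    by (simp add: power2_eq_square exp_add[symmetric])
  then show ?thesis
    by (simp only: real_sqrt_mult real_sqrt_abs) simp
qed

lemma energy_density_partials:
  fixes L :: "real \<times> real \<Rightarrow> real"
  assumes "L differentiable (at z)" "pX L differentiable (at z)"
  shows "pX (\<lambda>y. 2 * fst y * pX L y - L y) z = pX L z + 2 * fst z * pX (pX L) z"
    and "pPhi (\<lambda>y. 2 * fst y * pX L y - L y) z = 2 * fst z * pPhi (pX L) z - pPhi L z"
proof -
  obtain X \<phi> where z: "z = (X, \<phi>)"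
    by fastforce
  show "pX (\<lambda>y. 2 * fst y * pX L y - L y) z = pX L z + 2 * fst z * pX (pX L) z"
    unfolding pX_def[of "\<lambda>y. 2 * fst y * pX L y - L y"]
    by (rule DERIV_imp_deriv)
      (use pX_DERIV[OF assms(1)] pX_DERIV[OF assms(2)] in \<open>auto intro!: derivative_eq_intros\<close>)
  show "pPhi (\<lambda>y. 2 * fst y * pX L y - L y) z = 2 * fst z * pPhi (pX L) z - pPhi L z"
    unfolding pPhi_def[of "\<lambda>y. 2 * fst y * pX L y - L y"]
    by (rule DERIV_imp_deriv)
      (use pPhi_DERIV[OF assms(1)] pPhi_DERIV[OF assms(2)] in \<open>auto intro!: derivative_eq_intros\<close>)
qed

lemma density_factor_partials:
  fixes L w n :: "real \<times> real \<Rightarrow> real"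
  assumes S: "open S" "z \<in> S" and X: "fst z > 0"
    and n: "\<forall>y\<in>S. n y = w y * sqrt (2 * fst y) * pX L y"
    and dLX: "pX L differentiable (at z)" and dw: "w differentiable (at z)"
  shows "pX n z =
      (pX w z * pX L z + w z * pX L z / (2 * fst z) + w z * pX (pX L) z) * sqrt (2 * fst z)"
    and "pPhi n z = (pPhi w z * pX L z + w z * pPhi (pX L) z) * sqrt (2 * fst z)"
proof -
  obtain X \<phi> where z: "z = (X, \<phi>)"
    by fastforce
  have dX: "((\<lambda>t. w (t, \<phi>)) has_real_derivative pX w z) (at X)"
    "((\<lambda>t. pX L (t, \<phi>)) has_real_derivative pX (pX L) z) (at X)"
    using pX_DERIV[OF dw] pX_DERIV[OF dLX] unfolding z by simp_all
  have dP: "((\<lambda>t. w (X, t)) has_real_derivative pPhi w z) (at \<phi>)"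
    "((\<lambda>t. pX L (X, t)) has_real_derivative pPhi (pX L) z) (at \<phi>)"
    using pPhi_DERIV[OF dw] pPhi_DERIV[OF dLX] unfolding z by simp_all
  have "((\<lambda>t. sqrt (2 * t)) has_real_derivative sqrt (2 * X) / (2 * X)) (at X)"
    using X unfolding z by (auto intro!: derivative_eq_intros simp: field_simps real_sqrt_mult)
  from DERIV_mult[OF DERIV_mult[OF dX(1) this] dX(2)]
  show "pX n z =
      (pX w z * pX L z + w z * pX L z / (2 * fst z) + w z * pX (pX L) z) * sqrt (2 * fst z)"
    unfolding partials_cong[OF S n] unfolding pX_def[of "\<lambda>y. w y * sqrt (2 * fst y) * pX L y"] z
    by (simp add: DERIV_imp_deriv algebra_simps)
  from DERIV_mult[OF DERIV_cmult_right[OF dP(1), of "sqrt (2 * X)"] dP(2)]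
  show "pPhi n z = (pPhi w z * pX L z + w z * pPhi (pX L) z) * sqrt (2 * fst z)"
    unfolding partials_cong[OF S n] unfolding pPhi_def[of "\<lambda>y. w y * sqrt (2 * fst y) * pX L y"] z
    by (simp add: DERIV_imp_deriv algebra_simps)
qed

lemma isentropic_equations_iff:
  fixes L w n :: "real \<times> real \<Rightarrow> real"
  assumes S: "open S" "z \<in> S" and X: "fst z > 0"
    and n: "\<forall>y\<in>S. n y = w y * sqrt (2 * fst y) * pX L y"
    and dL: "L differentiable (at z)" "pX L differentiable (at z)"
    and dw: "w differentiable (at z)"
    and nz: "pX L z \<noteq> 0" "w z \<noteq> 0"
  defines "\<rho> \<equiv> \<lambda>y. 2 * fst y * pX L y - L y"
  shows "pX \<rho> z = (\<rho> z + L z) * pX n z / n z \<longleftrightarrow> pX w z = 0"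
    and "pPhi \<rho> z = (\<rho> z + L z) * pPhi n z / n z \<longleftrightarrow>
      - pPhi L z = 2 * fst z * pX L z * pPhi w z / w z"
proof -
  have \<rho>: "\<rho> z + L z = 2 * fst z * pX L z"
    "pX \<rho> z = pX L z + 2 * fst z * pX (pX L) z"
    "pPhi \<rho> z = 2 * fst z * pPhi (pX L) z - pPhi L z"
    using energy_density_partials[OF dL] unfolding \<rho>_def by simp_all
  have "n z = w z * sqrt (2 * fst z) * pX L z" "sqrt (2 * fst z) > 0"
    using n S(2) X by auto
  note n' = this density_factor_partials[OF S X n dL(2) dw]
  have "(\<rho> z + L z) * pX n z / n z = pX \<rho> z + 2 * fst z * pX L z * pX w z / w z"
    using X nz n'(2) unfolding n'(1,3) \<rho> by (simp add: field_simps)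
  then show "pX \<rho> z = (\<rho> z + L z) * pX n z / n z \<longleftrightarrow> pX w z = 0"
    using X nz by simp
  have "(\<rho> z + L z) * pPhi n z / n z =
      2 * fst z * pPhi (pX L) z + 2 * fst z * pX L z * pPhi w z / w z"
    using nz n'(2) unfolding n'(1,4) \<rho>(1) by (simp add: field_simps)
  then show "pPhi \<rho> z = (\<rho> z + L z) * pPhi n z / n z \<longleftrightarrow>
      - pPhi L z = 2 * fst z * pX L z * pPhi w z / w z"
    using \<rho>(3) by auto
qed

lemma partials_exp_snd:
  assumes "f differentiable (at (snd z))"
  shows "pX (\<lambda>y. c * exp (f (snd y))) z = 0"
    and "pPhi (\<lambda>y. c * exp (f (snd y))) z = c * exp (f (snd z)) * deriv f (snd z)"
  unfolding pX_def pPhi_def using assms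
  by (auto intro!: DERIV_imp_deriv derivative_eq_intros simp: DERIV_deriv_iff_real_differentiable)

lemma exp_profile_if_pX_zero:
  fixes w :: "real \<times> real \<Rightarrow> real"
  assumes I: "open I" "is_interval I"
    and w: "smooth2_on ({0<..} \<times> I) w" "\<forall>z\<in>{0<..} \<times> I. w z \<noteq> 0 \<and> pX w z = 0"
  obtains \<sigma> f where "\<sigma> \<in> {1, -1}" "smooth1_on I f"
    "\<And>X \<phi>. X > 0 \<Longrightarrow> \<phi> \<in> I \<Longrightarrow> w (X, \<phi>) = \<sigma> * exp (f \<phi>)"
    "\<And>X \<phi>. X > 0 \<Longrightarrow> \<phi> \<in> I \<Longrightarrow> pPhi w (X, \<phi>) = w (X, \<phi>) * deriv f \<phi>"
proof -
  define D where "D = {0::real<..} \<times> I"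
  have "open D"
    unfolding D_def using I(1) by (simp add: open_Times)
  have w1: "w (X, \<phi>) = w (1, \<phi>)" if "X > 0" "\<phi> \<in> I" for X \<phi>
    by (rule eq_along_fst_if_pX_zero[of "{0<..}" I]) 
      (use w smooth2_on_differentiable that in auto)
  have line: "smooth1_on I (\<lambda>\<phi>. F (1, \<phi>))" if "smooth2_on D F" for F
    using smooth1_on_line[OF \<open>open D\<close> I(1) that, of 1 0 0 1] by (simp add: D_def)
  obtain \<sigma> where \<sigma>: "\<sigma> \<in> {1, -1}" "\<forall>\<phi>\<in>I. \<sigma> * w (1, \<phi>) > 0"
  proof (rule continuous_on_nonzero_sign[OF I(2)])
    show "continuous_on I (\<lambda>\<phi>. w (1, \<phi>))"
      using line[OF w(1)[folded D_def]] smooth1_on_differentiable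
      by (meson continuous_at_imp_continuous_on differentiable_imp_continuous_within)
  qed (use w(2) in auto)
  define f where "f = (\<lambda>\<phi>. ln (\<sigma> * w (1, \<phi>)))"
  have wf: "w (X, \<phi>) = \<sigma> * exp (f \<phi>)" if "X > 0" "\<phi> \<in> I" for X \<phi>
    using \<sigma> w1[OF that] that by (auto simp: f_def)
  have "smooth2_on D (\<lambda>z. ln (\<sigma> * w z))"
  proof (rule smooth2_on_closure[OF \<open>open D\<close>], rule smooth2_closure.comp[OF smooth1_on_ln])
    show "(\<lambda>z. \<sigma> * w z) \<in> smooth2_closure D"
      using w(1) unfolding D_def
      by (intro smooth2_closure.mult smooth2_closure.const smooth2_closure.smooth)
    show "\<forall>z\<in>D. \<sigma> * w z \<in> {0<..}"
    proof
      fix z assume "z \<in> D"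
      then obtain X \<phi> where "z = (X, \<phi>)" "X > 0" "\<phi> \<in> I"
        unfolding D_def by auto
      then show "\<sigma> * w z \<in> {0<..}"
        using \<sigma>(2) w1[of X \<phi>] by simp
    qed
  qed simp
  then have f: "smooth1_on I f"
    unfolding f_def by (rule line)
  have "pPhi w (X, \<phi>) = w (X, \<phi>) * deriv f \<phi>" if "X > 0" "\<phi> \<in> I" for X \<phi>
  proof -
    have "pPhi w (X, \<phi>) = pPhi (\<lambda>z. \<sigma> * exp (f (snd z))) (X, \<phi>)"
      by (rule partials_cong[OF \<open>open D\<close>]) (use that wf in \<open>auto simp: D_def\<close>)
    also have "\<dots> = \<sigma> * exp (f \<phi>) * deriv f \<phi>"
      using partials_exp_snd(2)[of f "(X, \<phi>)"] smooth1_on_differentiable[OF f that(2)] by simp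
    finally show ?thesis
      using wf[OF that] by simp
  qed
  then show ?thesis
    using that \<sigma>(1) f wf by blast
qed

lemma constant_along_characteristics:
  assumes "is_interval I" "\<forall>\<phi>\<in>I. f differentiable (at \<phi>)"
    and "\<forall>z\<in>{0<..} \<times> I. L differentiable (at z)"
    and char: "\<forall>X>0. \<forall>\<phi>\<in>I. - pPhi L (X, \<phi>) = 2 * X * pX L (X, \<phi>) * deriv f \<phi>"
    and "Y > 0" "\<phi> \<in> I" "\<psi> \<in> I"
  shows "L (exp (2 * f \<phi>) * Y, \<phi>) = L (exp (2 * f \<psi>) * Y, \<psi>)"
proof -
  have "((\<lambda>t. L (exp (2 * f t) * Y, t)) has_real_derivative 0) (at t within I)" if "t \<in> I" for t
  proof -
    define X where "X = exp (2 * f t) * Y"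
    have "X > 0"
      using \<open>Y > 0\<close> by (simp add: X_def)
    have "((\<lambda>t. L (exp (2 * f t) * Y, t)) has_real_derivative
        (exp (2 * f t) * (2 * deriv f t) * Y) * pX L (X, t) + 1 * pPhi L (X, t)) (at t)"
      unfolding X_def
    proof (rule DERIV_partials_chain)
      show "L differentiable (at (exp (2 * f t) * Y, t))"
        using assms(3) \<open>X > 0\<close> that by (simp add: X_def)
      show "((\<lambda>t. exp (2 * f t) * Y) has_real_derivative
          exp (2 * f t) * (2 * deriv f t) * Y) (at t)"
        using assms(2) that
        by (auto intro!: derivative_eq_intros simp: DERIV_deriv_iff_real_differentiable)
    qed (rule DERIV_ident)
    moreover have "(exp (2 * f t) * (2 * deriv f t) * Y) * pX L (X, t) + 1 * pPhi L (X, t) = 0"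
    proof -
      have "exp (2 * f t) * (2 * deriv f t) * Y * pX L (X, t) = 2 * X * pX L (X, t) * deriv f t"
        by (simp add: X_def)
      then show ?thesis
        using char[rule_format, OF \<open>X > 0\<close> that] by linarith
    qed
    ultimately show ?thesis
      by (simp add: has_field_derivative_at_within)
  qed
  then obtain c where "\<forall>t\<in>I. L (exp (2 * f t) * Y, t) = c"
    using has_field_derivative_zero_constant[OF is_interval_convex_1[THEN iffD1, OF assms(1)]]
    by blast
  then show ?thesis
    using assms(6,7) by simp
qed

lemma field_redef_partials:
  fixes L :: "real \<times> real \<Rightarrow> real"
  assumes "open I" and L: "\<forall>X>0. \<forall>\<phi>\<in>I. L (X, \<phi>) = G (exp (- 2 * f \<phi>) * X)"
    and df: "f differentiable (at \<phi>)" and dG: "G differentiable (at (exp (- 2 * f \<phi>) * X))"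
    and "X > 0" "\<phi> \<in> I"
  shows "pX L (X, \<phi>) = exp (- 2 * f \<phi>) * deriv G (exp (- 2 * f \<phi>) * X)"
    and "pPhi L (X, \<phi>) = - 2 * X * pX L (X, \<phi>) * deriv f \<phi>"
proof -
  define e where "e = exp (- 2 * f \<phi>)"
  have "open ({0::real<..} \<times> I)" "(X, \<phi>) \<in> {0<..} \<times> I"
    using assms by (auto simp: open_Times)
  moreover have "\<forall>z\<in>{0<..} \<times> I. L z = G (exp (- 2 * f (snd z)) * fst z)"
    using L by auto
  ultimately have "pX L (X, \<phi>) = pX (\<lambda>z. G (exp (- 2 * f (snd z)) * fst z)) (X, \<phi>)"
    "pPhi L (X, \<phi>) = pPhi (\<lambda>z. G (exp (- 2 * f (snd z)) * fst z)) (X, \<phi>)"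
    by (rule partials_cong)+
  then have L': "pX L (X, \<phi>) = deriv (\<lambda>t. G (e * t)) X"
    "pPhi L (X, \<phi>) = deriv (\<lambda>t. G (exp (- 2 * f t) * X)) \<phi>"
    unfolding pX_def pPhi_def e_def by simp_all
  have dG': "(G has_real_derivative deriv G (e * X)) (at (e * X))"
    using dG unfolding e_def by (simp add: DERIV_deriv_iff_real_differentiable)
  have "((\<lambda>t. G (e * t)) has_real_derivative deriv G (e * X) * e) (at X)"
    using DERIV_chain2[OF dG' DERIV_cmult[OF DERIV_ident, of e]] by simp
  then show pX: "pX L (X, \<phi>) = e * deriv G (e * X)"
    unfolding L' by (simp add: DERIV_imp_deriv mult.commute)
  have "((\<lambda>t. exp (- 2 * f t) * X) has_real_derivative e * (- 2 * deriv f \<phi>) * X) (at \<phi>)"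
    using df unfolding e_def
    by (auto intro!: derivative_eq_intros simp: DERIV_deriv_iff_real_differentiable)
  from DERIV_imp_deriv[OF DERIV_chain2[OF dG'[unfolded e_def] this[unfolded e_def]]]
  show "pPhi L (X, \<phi>) = - 2 * X * pX L (X, \<phi>) * deriv f \<phi>"
    unfolding L'(2) pX e_def by (simp add: algebra_simps)
qed

lemma isentropic_reduced_density:
  fixes I :: "real set" and L n :: "real \<times> real \<Rightarrow> real"
  assumes I: "open I"
    and L: "smooth2_on ({0<..} \<times> I) L" "\<forall>z\<in>{0<..} \<times> I. pX L z \<noteq> 0"
    and isentropic: "isentropic_n I L n"
  defines "w \<equiv> \<lambda>z. n z / (sqrt (2 * fst z) * pX L z)"
  shows "smooth2_on ({0<..} \<times> I) w"
    and "\<forall>z\<in>{0<..} \<times> I. n z = w z * sqrt (2 * fst z) * pX L z \<and> w z \<noteq> 0 \<and>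
      pX w z = 0 \<and> - pPhi L z = 2 * fst z * pX L z * pPhi w z / w z"
proof -
  define D where "D = {0::real<..} \<times> I"
  have D: "open D" "\<And>z. z \<in> D \<longleftrightarrow> fst z > 0 \<and> snd z \<in> I"
    unfolding D_def using I by (auto simp: open_Times mem_Times_iff)
  have n: "smooth2_on D n" "\<forall>z\<in>D. n z \<noteq> 0"
    and equations: "\<forall>z\<in>D. pX (\<lambda>y. 2 * fst y * pX L y - L y) z =
        (2 * fst z * pX L z - L z + L z) * pX n z / n z \<and>
      pPhi (\<lambda>y. 2 * fst y * pX L y - L y) z = (2 * fst z * pX L z - L z + L z) * pPhi n z / n z"
    using isentropic unfolding isentropic_n_def Let_def D_def by auto
  have LX: "smooth2_on D (pX L)" "\<forall>z\<in>D. pX L z \<noteq> 0"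
    using smooth2_on_partials(1)[OF L(1)] L(2) unfolding D_def by auto
  have n_eq: "\<forall>z\<in>D. n z = w z * sqrt (2 * fst z) * pX L z" and w_nz: "\<forall>z\<in>D. w z \<noteq> 0"
    using LX(2) n(2) D(2) unfolding w_def by auto
  have "(\<lambda>z. n z * inverse (sqrt (2 * fst z) * pX L z)) \<in> smooth2_closure D"
    by (intro smooth2_closure.mult[OF smooth2_closure.smooth[OF n(1)]] smooth2_closure.inverse
        smooth2_closure.mult[OF smooth2_closure_sqrt_fst smooth2_closure.smooth[OF LX(1)]])
      (use LX(2) D(2) in auto)
  then have w: "smooth2_on D w"
    unfolding w_def divide_inverse by (rule smooth2_on_closure[OF D(1)])
  have "pX w z = 0 \<and> - pPhi L z = 2 * fst z * pX L z * pPhi w z / w z" if "z \<in> D" for z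
  proof -
    have "L differentiable (at z)" "pX L differentiable (at z)" "w differentiable (at z)"
      using smooth2_on_differentiable w LX(1) L(1) that unfolding D_def by blast+
    then show ?thesis
      using isentropic_equations_iff[OF D(1) that _ n_eq] equations LX(2) w_nz D(2) that by auto
  qed
  then show "smooth2_on ({0<..} \<times> I) w"
    and "\<forall>z\<in>{0<..} \<times> I. n z = w z * sqrt (2 * fst z) * pX L z \<and> w z \<noteq> 0 \<and>
      pX w z = 0 \<and> - pPhi L z = 2 * fst z * pX L z * pPhi w z / w z"
    using w n_eq w_nz unfolding D_def by auto
qed

lemma field_redef_if_characteristic:
  fixes I :: "real set" and L :: "real \<times> real \<Rightarrow> real"
  assumes I: "open I" "is_interval I" "I \<noteq> {}"
    and L: "smooth2_on ({0<..} \<times> I) L" and f: "smooth1_on I f"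
    and char: "\<forall>X>0. \<forall>\<phi>\<in>I. - pPhi L (X, \<phi>) = 2 * X * pX L (X, \<phi>) * deriv f \<phi>"
  shows "\<exists>G. field_redef I L f G"
proof -
  obtain p0 where "p0 \<in> I"
    using I(3) by blast
  \<comment> \<open>\<open>G Y\<close> is the value of \<open>L\<close> on the characteristic labelled by \<open>Y\<close>\<close>
  define G where "G = (\<lambda>Y. L (exp (2 * f p0) * Y, p0))"
  have "L (X, \<phi>) = G (exp (- 2 * f \<phi>) * X)" if "X > 0" "\<phi> \<in> I" for X \<phi>
  proof -
    have "L (exp (2 * f \<phi>) * (exp (- 2 * f \<phi>) * X), \<phi>) = G (exp (- 2 * f \<phi>) * X)"
      unfolding G_def
      by (rule constant_along_characteristics[OF I(2)])
        (use smooth1_on_differentiable[OF f] smooth2_on_differentiable[OF L] char that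
          \<open>p0 \<in> I\<close> in auto)
    then show ?thesis
      by (simp add: mult.assoc[symmetric] exp_add[symmetric])
  qed
  moreover have "smooth1_on {0<..} G"
    using smooth1_on_line[OF _ open_greaterThan L, where a = 0 and u = "exp (2 * f p0)" and b = p0
        and v = 0] I(1) \<open>p0 \<in> I\<close>
    by (simp add: G_def open_Times)
  ultimately show ?thesis
    unfolding field_redef_def using f by blast
qed

lemma isentropic_imp_field_redef:
  fixes I :: "real set" and L n :: "real \<times> real \<Rightarrow> real"
  assumes I: "open I" "is_interval I" "I \<noteq> {}"
    and L: "smooth2_on ({0<..} \<times> I) L" "\<forall>z\<in>{0<..} \<times> I. pX L z \<noteq> 0"
    and isentropic: "isentropic_n I L n"
  shows "\<exists>f G \<sigma>. field_redef I L f G \<and> \<sigma> \<in> {1, -1} \<and>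
    (\<forall>X>0. \<forall>\<phi>\<in>I.
      n (X, \<phi>) = \<sigma> * exp (f \<phi>) * sqrt (2 * X) * pX L (X, \<phi>) \<and>
      - pPhi L (X, \<phi>) = 2 * X * pX L (X, \<phi>) * deriv f \<phi> \<and>
      n (X, \<phi>) = \<sigma> * sqrt (2 * (exp (- 2 * f \<phi>) * X)) * deriv G (exp (- 2 * f \<phi>) * X))"
proof -
  define w where "w = (\<lambda>z. n z / (sqrt (2 * fst z) * pX L z))"
  then have "n z / (sqrt (2 * fst z) * pX L z) = w z" for z
    by simp
  note w = isentropic_reduced_density[OF I(1) L isentropic, unfolded this]
  obtain \<sigma> f where \<sigma>: "\<sigma> \<in> {1, -1}" and f: "smooth1_on I f"
    and w_exp: "\<And>X \<phi>. X > 0 \<Longrightarrow> \<phi> \<in> I \<Longrightarrow> w (X, \<phi>) = \<sigma> * exp (f \<phi>)"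
    and w_phi: "\<And>X \<phi>. X > 0 \<Longrightarrow> \<phi> \<in> I \<Longrightarrow> pPhi w (X, \<phi>) = w (X, \<phi>) * deriv f \<phi>"
    by (rule exp_profile_if_pX_zero[OF I(1,2) w(1)]) (use w(2) in auto)
  have char: "\<forall>X>0. \<forall>\<phi>\<in>I. - pPhi L (X, \<phi>) = 2 * X * pX L (X, \<phi>) * deriv f \<phi>"
    using w(2) w_phi by auto
  then obtain G where G: "field_redef I L f G"
    using field_redef_if_characteristic[OF I L(1) f] by blast
  then have Gs: "smooth1_on {0<..} G" and LG: "\<forall>X>0. \<forall>\<phi>\<in>I. L (X, \<phi>) = G (exp (- 2 * f \<phi>) * X)"
    unfolding field_redef_def by auto
  have "exp (- f \<phi>) * deriv G (exp (- 2 * f \<phi>) * X) = exp (f \<phi>) * pX L (X, \<phi>)"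
    if "X > 0" "\<phi> \<in> I" for X \<phi>
  proof -
    have "pX L (X, \<phi>) = exp (- 2 * f \<phi>) * deriv G (exp (- 2 * f \<phi>) * X)"
      using field_redef_partials(1)[OF I(1) LG smooth1_on_differentiable[OF f that(2)]
          smooth1_on_differentiable[OF Gs] that] that by simp
    moreover have "exp (- 2 * f \<phi>) = exp (- f \<phi>) * exp (- f \<phi>)"
      by (simp flip: exp_add)
    ultimately have "exp (f \<phi>) * pX L (X, \<phi>) =
        (exp (f \<phi>) * exp (- f \<phi>)) * (exp (- f \<phi>) * deriv G (exp (- 2 * f \<phi>) * X))"
      by (simp only: ac_simps)
    then show ?thesis
      by (simp flip: exp_add)
  qed
  moreover have "n (X, \<phi>) = \<sigma> * exp (f \<phi>) * sqrt (2 * X) * pX L (X, \<phi>)" if "X > 0" "\<phi> \<in> I" for X \<phi>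
    using w(2) w_exp[OF that] that by auto
  ultimately show ?thesis
    using G char sqrt_exp_scaled \<sigma> by (intro exI[of _ f] exI[of _ G] exI[of _ \<sigma>]) auto
qed

lemma field_redef_imp_isentropic:
  fixes I :: "real set" and L :: "real \<times> real \<Rightarrow> real"
  assumes I: "open I"
    and L: "smooth2_on ({0<..} \<times> I) L" "\<forall>z\<in>{0<..} \<times> I. pX L z \<noteq> 0"
    and redef: "field_redef I L f G"
  shows "isentropic_n I L (\<lambda>z. exp (f (snd z)) * sqrt (2 * fst z) * pX L z)"
proof -
  define D where "D = {0::real<..} \<times> I"
  define w where "w = (\<lambda>z :: real \<times> real. exp (f (snd z)))"
  define n where "n = (\<lambda>z. w z * sqrt (2 * fst z) * pX L z)"
  have D: "open D" "\<And>X \<phi>. (X, \<phi>) \<in> D \<longleftrightarrow> X > 0 \<and> \<phi> \<in> I"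
    unfolding D_def using I by (auto simp: open_Times)
  have f: "smooth1_on I f" and G: "smooth1_on {0<..} G"
    and LG: "\<forall>X>0. \<forall>\<phi>\<in>I. L (X, \<phi>) = G (exp (- 2 * f \<phi>) * X)"
    using redef unfolding field_redef_def by auto
  have LX: "smooth2_on D (pX L)"
    using smooth2_on_partials(1) L(1) unfolding D_def .
  have w: "w \<in> smooth2_closure D"
    unfolding w_def
    by (rule smooth2_closure.comp[OF smooth1_on_exp open_UNIV
          smooth2_closure.comp[OF f I smooth2_closure.snd]])
      (auto simp: D_def)
  have "smooth2_on D n"
    unfolding n_def
    by (intro smooth2_on_closure[OF D(1)] smooth2_closure.mult[OF smooth2_closure.mult[OF w]]
        smooth2_closure.smooth[OF LX] smooth2_closure_sqrt_fst) (simp add: D_def)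
  have "pX (\<lambda>y. 2 * fst y * pX L y - L y) z = (2 * fst z * pX L z - L z + L z) * pX n z / n z \<and>
      pPhi (\<lambda>y. 2 * fst y * pX L y - L y) z = (2 * fst z * pX L z - L z + L z) * pPhi n z / n z"
    if zD: "z \<in> D" for z
  proof -
    obtain X \<phi> where z: "z = (X, \<phi>)" "X > 0" "\<phi> \<in> I"
      using zD D(2) by (cases z) auto
    have "pX w z = 0" "pPhi w z = w z * deriv f \<phi>"
      using partials_exp_snd[of f z 1] smooth1_on_differentiable[OF f z(3)]
      unfolding w_def z(1) by simp_all
    moreover have "- pPhi L z = 2 * X * pX L z * deriv f \<phi>"
      unfolding z(1)
      using field_redef_partials(2)[OF I LG _ _ z(2,3)] smooth1_on_differentiable[OF f z(3)]
        smooth1_on_differentiable[OF G] z(2) by simp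
    moreover have "L differentiable (at z)" "pX L differentiable (at z)" "w differentiable (at z)"
      using smooth2_on_differentiable L(1) LX
        smooth2_on_differentiable[OF smooth2_on_closure[OF D(1) w]]
        zD unfolding D_def by blast+
    ultimately show ?thesis
      using isentropic_equations_iff[OF D(1) zD _ _ _ _ _ _ _, of n w L] z L(2) zD
      unfolding D_def n_def w_def by auto
  qed
  moreover have "n z \<noteq> 0" if "z \<in> D" for z
    using L(2) that unfolding n_def w_def D_def by auto
  ultimately show ?thesis
    using \<open>smooth2_on D n\<close> unfolding isentropic_n_def Let_def D_def[symmetric] n_def w_def by auto
qed

theorem mainTheorem1:
  fixes I :: "real set" and L :: "real \<times> real \<Rightarrow> real"
  assumes I_open: "open I" and I_interval: "is_interval I" and I_ne: "I \<noteq> {}"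
    and L_smooth: "smooth2_on ({0<..} \<times> I) L"
    and L_X_nz: "\<forall>z\<in>{0<..} \<times> I. pX L z \<noteq> 0"
  shows "((\<exists>n. isentropic_n I L n) \<longleftrightarrow> (\<exists>f G. field_redef I L f G)) \<and>
         (\<forall>n. isentropic_n I L n \<longrightarrow>
           (\<exists>f G \<sigma>. field_redef I L f G \<and> \<sigma> \<in> {1, -1} \<and>
              (\<forall>X>0. \<forall>\<phi>\<in>I.
                 n (X, \<phi>) = \<sigma> * exp (f \<phi>) * sqrt (2 * X) * pX L (X, \<phi>) \<and>
                 - pPhi L (X, \<phi>) = 2 * X * pX L (X, \<phi>) * deriv f \<phi> \<and>
                 n (X, \<phi>) = \<sigma> * sqrt (2 * (exp (- 2 * f \<phi>) * X))
                              * deriv G (exp (- 2 * f \<phi>) * X))))"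
  using isentropic_imp_field_redef[OF assms] field_redef_imp_isentropic[OF I_open L_smooth L_X_nz]
  by blast

end
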